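(* Let $\mathcal{N}$ be a deterministic negotiation such that for every node $n\in N$ that is reachable from $n_{\mathit{init}}$ by a local path, and every process $p\in\mathit{dom}(n)$, there exists a $p$-path from $n$ to $n_{\mathit{fin}}$. Then $\mathcal{N}$ is unsound if and only if some initial run leads to a deadlock configuration.
   Context: A negotiation is a tuple $\mathcal{N}=(\mathit{Proc},N,\mathit{dom},R,\delta)$ where $\mathit{Proc}$ is a finite set of processes, $N$ is a finite set of nodes (atomic negotiations), $\mathit{dom}:N\to 2^{\mathit{Proc}}\setminus\{\emptyset\}$, there are two distinguished nodes $n_{\mathit{init}},n_{\mathit{fin}}$ with $\mathit{dom}(n_{\mathit{init}})=\mathit{dom}(n_{\mathit{fin}})=\mathit{Proc}$, $R$ is a set of results, each node $n$ has a set $\mathit{out}(n)\subseteq R$ of results (nonempty for $n\neq n_{\mathit{fin}}$), and $\delta(n,a,p)\subseteq N$ is defined and nonempty exactly when $a\in\mathit{out}(n)$ and $p\in\mathit{dom}(n)$, with $p\in\mathit{dom}(n')$ for all $n'\in\delta(n,a,p)$. A configuration is a map $C$ assigning to each process a nonempty set of nodes; $C_{\mathit{init}}(p)=\{n_{\mathit{init}}\}$ and $C_{\mathit{fin}}(p)=\{n_{\mathit{fin}}\}$ for all $p$. A node $n$ is enabled in $C$ if $n\in C(p)$ for all $p\in\mathit{dom}(n)$; $C$ is a deadlock if no node is enabled in it. If $n$ is enabled in $C$ and $a\in\mathit{out}(n)$, then $C\xrightarrow{(n,a)}C'$ where $C'(p)=\delta(n,a,p)$ for $p\in\mathit{dom}(n)$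 and $C'(p)=C(p)$ otherwise. A run from $C_1$ is a finite or infinite sequence $(n_1,a_1)(n_2,a_2)\cdots$ with $C_1\xrightarrow{(n_1,a_1)}C_2\xrightarrow{(n_2,a_2)}\cdots$; a run is initial if it starts at $C_{\mathit{init}}$, and successful if it is initial, finite and ends in $C_{\mathit{fin}}$. $\mathcal{N}$ is sound if every finite initial run can be extended to a successful run. The graph of $\mathcal{N}$ has vertex set $N$ and an edge $n\xrightarrow{p,a}n'$ whenever $n'\in\delta(n,a,p)$. A local path is a path $n_0\xrightarrow{p_0,a_0}n_1\cdots\xrightarrow{p_{k-1},a_{k-1}}n_k$ in this graph; it is a $p$-path if $p_0=\dots=p_{k-1}=p$. A process $p$ is deterministic if $\delta(n,a,p)$ is a singleton for all $n$ with $p\in\mathit{dom}(n)$ and all $a\in\mathit{out}(n)$; $\mathcal{N}$ is deterministic if every process is deterministic. *)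

theory Defs
  imports Main
begin

text \<open>Configurations are maps 'p => 'n set; on processes outside Proc they are
  fixed to the empty set.\<close>

definition is_negotiation ::
  "'p set \<Rightarrow> 'n set \<Rightarrow> 'r set \<Rightarrow> ('n \<Rightarrow> 'p set) \<Rightarrow> 'n \<Rightarrow> 'n \<Rightarrow> ('n \<Rightarrow> 'r set)
   \<Rightarrow> ('n \<Rightarrow> 'r \<Rightarrow> 'p \<Rightarrow> 'n set) \<Rightarrow> bool" where
  "is_negotiation Proc N R dm ninit nfin out delta \<longleftrightarrow>
     finite Proc \<and> finite N \<and> ninit \<in> N \<and> nfin \<in> N \<and>
     (\<forall>n\<in>N. dm n \<noteq> {} \<and> dm n \<subseteq> Proc) \<and>
     dm ninit = Proc \<and> dm nfin = Proc \<and>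
     (\<forall>n\<in>N. out n \<subseteq> R) \<and>
     (\<forall>n\<in>N. n \<noteq> nfin \<longrightarrow> out n \<noteq> {}) \<and> out nfin = {} \<and>
     (\<forall>n\<in>N. \<forall>a\<in>out n. \<forall>p\<in>dm n.
        delta n a p \<noteq> {} \<and> delta n a p \<subseteq> N \<and> (\<forall>n'\<in>delta n a p. p \<in> dm n'))"

definition deterministic_process ::
  "'n set \<Rightarrow> ('n \<Rightarrow> 'p set) \<Rightarrow> ('n \<Rightarrow> 'r set) \<Rightarrow> ('n \<Rightarrow> 'r \<Rightarrow> 'p \<Rightarrow> 'n set) \<Rightarrow> 'p \<Rightarrow> bool" where
  "deterministic_process N dm out delta p \<longleftrightarrow>
     (\<forall>n\<in>N. p \<in> dm n \<longrightarrow> (\<forall>a\<in>out n. \<exists>n'. delta n a p = {n'}))"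

definition deterministic ::
  "'p set \<Rightarrow> 'n set \<Rightarrow> ('n \<Rightarrow> 'p set) \<Rightarrow> ('n \<Rightarrow> 'r set) \<Rightarrow> ('n \<Rightarrow> 'r \<Rightarrow> 'p \<Rightarrow> 'n set) \<Rightarrow> bool" where
  "deterministic Proc N dm out delta \<longleftrightarrow> (\<forall>p\<in>Proc. deterministic_process N dm out delta p)"

definition graph_edge ::
  "'n set \<Rightarrow> ('n \<Rightarrow> 'p set) \<Rightarrow> ('n \<Rightarrow> 'r set) \<Rightarrow> ('n \<Rightarrow> 'r \<Rightarrow> 'p \<Rightarrow> 'n set)
   \<Rightarrow> 'n \<Rightarrow> 'p \<Rightarrow> 'r \<Rightarrow> 'n \<Rightarrow> bool" where
  "graph_edge N dm out delta n p a n' \<longleftrightarrow>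
     n \<in> N \<and> a \<in> out n \<and> p \<in> dm n \<and> n' \<in> delta n a p"

definition local_path ::
  "'n set \<Rightarrow> ('n \<Rightarrow> 'p set) \<Rightarrow> ('n \<Rightarrow> 'r set) \<Rightarrow> ('n \<Rightarrow> 'r \<Rightarrow> 'p \<Rightarrow> 'n set) \<Rightarrow> 'n \<Rightarrow> 'n \<Rightarrow> bool" where
  "local_path N dm out delta n n' \<longleftrightarrow>
     (n, n') \<in> {(x, y). \<exists>p a. graph_edge N dm out delta x p a y}\<^sup>*"

definition p_path ::
  "'n set \<Rightarrow> ('n \<Rightarrow> 'p set) \<Rightarrow> ('n \<Rightarrow> 'r set) \<Rightarrow> ('n \<Rightarrow> 'r \<Rightarrow> 'p \<Rightarrow> 'n set) \<Rightarrow> 'p \<Rightarrow> 'n \<Rightarrow> 'n \<Rightarrow> bool" where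
  "p_path N dm out delta p n n' \<longleftrightarrow>
     (n, n') \<in> {(x, y). \<exists>a. graph_edge N dm out delta x p a y}\<^sup>*"

definition C_init :: "'p set \<Rightarrow> 'n \<Rightarrow> 'p \<Rightarrow> 'n set" where
  "C_init Proc ninit = (\<lambda>p. if p \<in> Proc then {ninit} else {})"

definition C_fin :: "'p set \<Rightarrow> 'n \<Rightarrow> 'p \<Rightarrow> 'n set" where
  "C_fin Proc nfin = (\<lambda>p. if p \<in> Proc then {nfin} else {})"

definition enabled :: "'n set \<Rightarrow> ('n \<Rightarrow> 'p set) \<Rightarrow> 'n \<Rightarrow> ('p \<Rightarrow> 'n set) \<Rightarrow> bool" where
  "enabled N dm n C \<longleftrightarrow> n \<in> N \<and> (\<forall>p\<in>dm n. n \<in> C p)"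

definition deadlock :: "'n set \<Rightarrow> ('n \<Rightarrow> 'p set) \<Rightarrow> ('p \<Rightarrow> 'n set) \<Rightarrow> bool" where
  "deadlock N dm C \<longleftrightarrow> \<not> (\<exists>n. enabled N dm n C)"

definition step ::
  "'n set \<Rightarrow> ('n \<Rightarrow> 'p set) \<Rightarrow> ('n \<Rightarrow> 'r set) \<Rightarrow> ('n \<Rightarrow> 'r \<Rightarrow> 'p \<Rightarrow> 'n set)
   \<Rightarrow> ('p \<Rightarrow> 'n set) \<Rightarrow> 'n \<times> 'r \<Rightarrow> ('p \<Rightarrow> 'n set) \<Rightarrow> bool" where
  "step N dm out delta C na C' \<longleftrightarrow>
     (case na of (n, a) \<Rightarrow> enabled N dm n C \<and> a \<in> out n \<and>
        C' = (\<lambda>p. if p \<in> dm n then delta n a p else C p))"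

fun run ::
  "'n set \<Rightarrow> ('n \<Rightarrow> 'p set) \<Rightarrow> ('n \<Rightarrow> 'r set) \<Rightarrow> ('n \<Rightarrow> 'r \<Rightarrow> 'p \<Rightarrow> 'n set)
   \<Rightarrow> ('p \<Rightarrow> 'n set) \<Rightarrow> ('n \<times> 'r) list \<Rightarrow> ('p \<Rightarrow> 'n set) \<Rightarrow> bool" where
  "run N dm out delta C [] C' \<longleftrightarrow> C' = C"
| "run N dm out delta C (na # rs) C' \<longleftrightarrow>
     (\<exists>C''. step N dm out delta C na C'' \<and> run N dm out delta C'' rs C')"

definition sound ::
  "'p set \<Rightarrow> 'n set \<Rightarrow> ('n \<Rightarrow> 'p set) \<Rightarrow> 'n \<Rightarrow> 'n \<Rightarrow> ('n \<Rightarrow> 'r set)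
   \<Rightarrow> ('n \<Rightarrow> 'r \<Rightarrow> 'p \<Rightarrow> 'n set) \<Rightarrow> bool" where
  "sound Proc N dm ninit nfin out delta \<longleftrightarrow>
     (\<forall>rs C. run N dm out delta (C_init Proc ninit) rs C \<longrightarrow>
        (\<exists>rs'. run N dm out delta (C_init Proc ninit) (rs @ rs') (C_fin Proc nfin)))"

end

theory Submission
  imports Defs
begin

text \<open>In a deterministic negotiation every reachable configuration places each process at a
  single node, so only finitely many configurations are reachable. If no deadlock is reachable,
  take a configuration D from which every reachable configuration can return to D. Some node n is
  enabled in D; pick p in its domain. Each node on a p-path from n to n_fin becomes enabled
  again while p waits there (p cannot move before), and firing it with the result labelling the
  edge moves p to the next node of the path. So p reaches n_fin, where it stays forever; returning
  to D shows n = n_fin, i.e. D is the final configuration.\<close>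

lemma run_append:
  "run N dm out delta C (xs @ ys) C' \<longleftrightarrow>
   (\<exists>C''. run N dm out delta C xs C'' \<and> run N dm out delta C'' ys C')"
  by (induction xs arbitrary: C) auto

lemma run_functional:
  "run N dm out delta C rs E \<Longrightarrow> run N dm out delta C rs E' \<Longrightarrow> E = E'"
  by (induction rs arbitrary: C) (auto simp: step_def split: prod.splits)

definition reachable ::
  "'n set \<Rightarrow> ('n \<Rightarrow> 'p set) \<Rightarrow> ('n \<Rightarrow> 'r set) \<Rightarrow> ('n \<Rightarrow> 'r \<Rightarrow> 'p \<Rightarrow> 'n set)
   \<Rightarrow> ('p \<Rightarrow> 'n set) \<Rightarrow> ('p \<Rightarrow> 'n set) \<Rightarrow> bool" where
  "reachable N dm out delta C C' \<longleftrightarrow> (\<exists>rs. run N dm out delta C rs C')"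

lemma reachable_refl: "reachable N dm out delta C C"
  unfolding reachable_def by (metis run.simps(1))

lemma reachable_trans:
  "reachable N dm out delta C C' \<Longrightarrow> reachable N dm out delta C' C'' \<Longrightarrow>
   reachable N dm out delta C C''"
  unfolding reachable_def by (metis run_append)

lemma reachable_step:
  "step N dm out delta C na C' \<Longrightarrow> reachable N dm out delta C C'"
  unfolding reachable_def by (metis run.simps)

lemma reachable_cases:
  assumes "reachable N dm out delta C C'"
  obtains "C' = C"
  | na C'' where "step N dm out delta C na C''" "reachable N dm out delta C'' C'"
  using assms unfolding reachable_def by (metis list.exhaust run.simps)

lemma reachable_induct [consumes 1, case_names refl step]:
  assumes "reachable N dm out delta C C'"
    and "\<And>C. P C C"
    and "\<And>C na C'' C'. step N dm out delta C na C'' \<Longrightarrow> reachable N dm out delta C'' C' \<Longrightarrow>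
           P C'' C' \<Longrightarrow> P C C'"
  shows "P C C'"
proof -
  obtain rs where "run N dm out delta C rs C'"
    using assms(1) unfolding reachable_def by blast
  then show ?thesis
  proof (induction rs arbitrary: C)
    case Nil
    then show ?case using assms(2) by simp
  next
    case (Cons na rs)
    then obtain C'' where "step N dm out delta C na C''" "run N dm out delta C'' rs C'" by auto
    then show ?case using Cons.IH assms(3) unfolding reachable_def by blast
  qed
qed

lemma deadlock_reachable_eq:
  "deadlock N dm C \<Longrightarrow> reachable N dm out delta C C' \<Longrightarrow> C' = C"
  by (erule reachable_cases) (auto simp: deadlock_def step_def)

text \<open>Descend to a successor with strictly fewer successors of its own.\<close>

lemma finite_preorder_has_bottom:
  assumes "reflp R" "transp R" "finite {y. R x y}"
  shows "\<exists>z. R x z \<and> (\<forall>y. R z y \<longrightarrow> R y z)"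
  using assms(3)
proof (induction "card {y. R x y}" arbitrary: x rule: less_induct)
  case less
  show ?case
  proof (cases "\<forall>y. R x y \<longrightarrow> R y x")
    case True
    then show ?thesis using assms(1) by (auto dest: reflpD)
  next
    case False
    then obtain y where xy: "R x y" and yx: "\<not> R y x" by blast
    have sub: "{z. R y z} \<subset> {z. R x z}"
      using xy yx assms(1,2) by (auto dest: reflpD transpD)
    then have "finite {z. R y z}" using less.prems finite_subset by blast
    moreover have "card {z. R y z} < card {z. R x z}"
      using sub less.prems by (rule psubset_card_mono[rotated])
    ultimately obtain z where "R y z" "\<forall>w. R z w \<longrightarrow> R w z"
      using less.hyps by blast
    then show ?thesis using xy assms(2) by (meson transpD)
  qed
qed

text \<open>Before a node containing p fires, p stays where it is; the first such node is p's
  current node, so that node gets enabled while p still sits there.\<close>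

lemma current_node_enabled_before:
  assumes "reachable N dm out delta D D'" "D p = {m}" "enabled N dm n D'" "p \<in> dm n"
  shows "\<exists>E. reachable N dm out delta D E \<and> E p = {m} \<and> enabled N dm m E"
  using assms
proof (induction rule: reachable_induct)
  case (refl C)
  then have "n = m" by (auto simp: enabled_def)
  then show ?case using refl reachable_refl by blast
next
  case (step C na C'' C')
  obtain n' a where na: "na = (n', a)" by fastforce
  show ?case
  proof (cases "p \<in> dm n'")
    case True
    then have "enabled N dm m C"
      using step.hyps(1) step.prems(1) na by (auto simp: step_def enabled_def)
    then show ?thesis using step.prems(1) reachable_refl by blast
  next
    case False
    then have "C'' p = {m}" using step.hyps(1) step.prems(1) na by (simp add: step_def)
    then obtain E where "reachable N dm out delta C'' E" "E p = {m}" "enabled N dm m E"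
      using step.IH step.prems(2,3) by blast
    then show ?thesis using reachable_trans[OF reachable_step[OF step.hyps(1)]] by blast
  qed
qed

locale negotiation =
  fixes Proc :: "'p set" and N :: "'n set" and R :: "'r set"
    and dm :: "'n \<Rightarrow> 'p set" and ninit nfin :: 'n
    and out :: "'n \<Rightarrow> 'r set" and delta :: "'n \<Rightarrow> 'r \<Rightarrow> 'p \<Rightarrow> 'n set"
  assumes is_negotiation: "is_negotiation Proc N R dm ninit nfin out delta"
begin

lemma finite_Proc: "finite Proc" and finite_N: "finite N"
  and ninit_in_N: "ninit \<in> N" and nfin_in_N: "nfin \<in> N"
  and dm_ninit: "dm ninit = Proc" and dm_nfin: "dm nfin = Proc"
  and out_nfin: "out nfin = {}"
  using is_negotiation unfolding is_negotiation_def by blast+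

lemma dm_nonempty: "n \<in> N \<Longrightarrow> dm n \<noteq> {}"
  and dm_subset_Proc: "n \<in> N \<Longrightarrow> dm n \<subseteq> Proc"
  using is_negotiation unfolding is_negotiation_def by blast+

lemma delta_subset_N: "n \<in> N \<Longrightarrow> a \<in> out n \<Longrightarrow> p \<in> dm n \<Longrightarrow> delta n a p \<subseteq> N"
  and delta_dm: "n \<in> N \<Longrightarrow> a \<in> out n \<Longrightarrow> p \<in> dm n \<Longrightarrow> n' \<in> delta n a p \<Longrightarrow> p \<in> dm n'"
  using is_negotiation unfolding is_negotiation_def by blast+

lemma C_fin_not_deadlock: "\<not> deadlock N dm (C_fin Proc nfin)"
  using nfin_in_N dm_nfin by (auto simp: deadlock_def enabled_def C_fin_def)

lemma sound_iff_C_fin_reachable: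
  "sound Proc N dm ninit nfin out delta \<longleftrightarrow>
   (\<forall>C. reachable N dm out delta (C_init Proc ninit) C \<longrightarrow>
        reachable N dm out delta C (C_fin Proc nfin))"
proof
  assume "sound Proc N dm ninit nfin out delta"
  then show "\<forall>C. reachable N dm out delta (C_init Proc ninit) C \<longrightarrow>
               reachable N dm out delta C (C_fin Proc nfin)"
    unfolding sound_def reachable_def using run_append run_functional by metis
next
  assume "\<forall>C. reachable N dm out delta (C_init Proc ninit) C \<longrightarrow>
             reachable N dm out delta C (C_fin Proc nfin)"
  then show "sound Proc N dm ninit nfin out delta"
    unfolding sound_def reachable_def using run_append by blast
qed

text \<open>n_fin has no results, so a process that has arrived there never moves again.\<close>

lemma nfin_persists:
  assumes "reachable N dm out delta D D'" "D p = {nfin}"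
  shows "D' p = {nfin}"
  using assms
proof (induction rule: reachable_induct)
  case (step C na C'' C')
  obtain n a where na: "na = (n, a)" by fastforce
  have "p \<notin> dm n"
  proof
    assume "p \<in> dm n"
    then have "n = nfin" using step.hyps(1) step.prems na by (auto simp: step_def enabled_def)
    then show False using step.hyps(1) na out_nfin by (simp add: step_def)
  qed
  then have "C'' p = {nfin}" using step.hyps(1) step.prems na by (simp add: step_def)
  then show ?case using step.IH by blast
qed

end

locale deterministic_negotiation = negotiation +
  assumes deterministic: "deterministic Proc N dm out delta"
begin

lemma delta_singleton: "n \<in> N \<Longrightarrow> a \<in> out n \<Longrightarrow> p \<in> dm n \<Longrightarrow> \<exists>n'. delta n a p = {n'}"
  using deterministic dm_subset_Proc
  unfolding deterministic_def deterministic_process_def by blast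

text \<open>The invariant of initial runs. Reachability of the nodes by local paths is recorded
  because the p-path hypothesis of the theorem only speaks about such nodes.\<close>

definition single_node_config where
  "single_node_config C \<longleftrightarrow>
     (\<forall>p\<in>Proc. \<exists>m. C p = {m} \<and> m \<in> N \<and> p \<in> dm m \<and> local_path N dm out delta ninit m)
     \<and> (\<forall>p. p \<notin> Proc \<longrightarrow> C p = {})"

lemma single_node_config_C_init: "single_node_config (C_init Proc ninit)"
  using ninit_in_N dm_ninit by (auto simp: single_node_config_def C_init_def local_path_def)

lemma single_node_config_step:
  assumes C: "single_node_config C" and st: "step N dm out delta C (n, a) C'"
  shows "single_node_config C'"
proof -
  have en: "enabled N dm n C" and a: "a \<in> out n"
    and C': "C' = (\<lambda>p. if p \<in> dm n then delta n a p else C p)"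
    using st by (auto simp: step_def)
  have n: "n \<in> N" using en by (simp add: enabled_def)
  have "\<exists>m. C' p = {m} \<and> m \<in> N \<and> p \<in> dm m \<and> local_path N dm out delta ninit m"
    if p: "p \<in> Proc" "p \<in> dm n" for p
  proof -
    have "C p = {n}" using C en p by (force simp: single_node_config_def enabled_def)
    then have "local_path N dm out delta ninit n" using C p by (auto simp: single_node_config_def)
    moreover obtain n' where n': "delta n a p = {n'}" using delta_singleton n a p by blast
    moreover have "graph_edge N dm out delta n p a n'" using n a p n' by (simp add: graph_edge_def)
    ultimately have "local_path N dm out delta ninit n'"
      unfolding local_path_def by (blast intro: rtrancl_into_rtrancl)
    then show ?thesis using C' p n' delta_subset_N[OF n a] delta_dm[OF n a] by auto
  qed
  then show ?thesis
    using C C' dm_subset_Proc[OF n] unfolding single_node_config_def by auto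
qed

lemma single_node_config_reachable:
  assumes "reachable N dm out delta C C'" "single_node_config C"
  shows "single_node_config C'"
  using assms
proof (induction rule: reachable_induct)
  case (step C na C'' C')
  then show ?case by (cases na) (blast intro: single_node_config_step)
qed

lemma finite_single_node_configs: "finite {C. single_node_config C}"
proof (rule finite_subset)
  show "{C. single_node_config C} \<subseteq>
        {f. \<forall>x. (x \<in> Proc \<longrightarrow> f x \<in> Pow N) \<and> (x \<notin> Proc \<longrightarrow> f x = {})}"
    by (auto simp: single_node_config_def)
  show "finite {f. \<forall>x. (x \<in> Proc \<longrightarrow> f x \<in> Pow N) \<and> (x \<notin> Proc \<longrightarrow> f x = {})}"
    using finite_Proc finite_N by (intro finite_set_of_finite_funs) auto
qed

lemma single_node_config_nfin_enabled:
  assumes "single_node_config C" "enabled N dm nfin C"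
  shows "C = C_fin Proc nfin"
proof
  fix p
  show "C p = C_fin Proc nfin p"
  proof (cases "p \<in> Proc")
    case True
    then obtain m where "C p = {m}" using assms(1) by (auto simp: single_node_config_def)
    moreover have "nfin \<in> C p" using assms(2) dm_nfin True by (simp add: enabled_def)
    ultimately show ?thesis using True by (simp add: C_fin_def)
  next
    case False
    then show ?thesis using assms(1) by (simp add: single_node_config_def C_fin_def)
  qed
qed

lemma p_path_followed:
  assumes bottom: "\<forall>E. reachable N dm out delta D E \<longrightarrow> reachable N dm out delta E D"
    and en: "enabled N dm n D" "p \<in> dm n"
    and path: "p_path N dm out delta p m m'"
  shows "reachable N dm out delta D C \<Longrightarrow> C p = {m} \<Longrightarrow>
         \<exists>E. reachable N dm out delta D E \<and> E p = {m'}"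
  using path unfolding p_path_def
proof (induction arbitrary: C rule: converse_rtrancl_induct)
  case base
  then show ?case by blast
next
  case (step m m1)
  from step.hyps(1) obtain a where m: "m \<in> N" and a: "a \<in> out m" and pm: "p \<in> dm m"
    and m1: "m1 \<in> delta m a p"
    by (auto simp: graph_edge_def)
  have "reachable N dm out delta C D" using bottom step.prems(1) by blast
  then obtain E where E: "reachable N dm out delta C E" "E p = {m}" "enabled N dm m E"
    using current_node_enabled_before step.prems(2) en by metis
  define E' where "E' = (\<lambda>q. if q \<in> dm m then delta m a q else E q)"
  have "step N dm out delta E (m, a) E'" using E(3) a by (simp add: step_def E'_def)
  then have "reachable N dm out delta D E'"
    using reachable_trans[OF reachable_trans[OF step.prems(1) E(1)] reachable_step] by blast
  moreover have "E' p = {m1}"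
    using delta_singleton[OF m a pm] m1 pm by (auto simp: E'_def)
  ultimately show ?case by (rule step.IH)
qed

lemma C_fin_reachable_if_no_deadlock:
  assumes paths: "\<forall>n\<in>N. local_path N dm out delta ninit n \<longrightarrow>
           (\<forall>p\<in>dm n. p_path N dm out delta p n nfin)"
    and no_deadlock: "\<forall>E. reachable N dm out delta (C_init Proc ninit) E \<longrightarrow> \<not> deadlock N dm E"
    and C: "reachable N dm out delta (C_init Proc ninit) C"
  shows "reachable N dm out delta C (C_fin Proc nfin)"
proof -
  let ?reach = "reachable N dm out delta"
  have single: "single_node_config E" if "?reach C E" for E
    using single_node_config_reachable[OF reachable_trans[OF C that] single_node_config_C_init] .
  then have "{E. ?reach C E} \<subseteq> {E. single_node_config E}" by blast
  then have "finite {E. ?reach C E}" using finite_single_node_configs by (rule finite_subset)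
  moreover have "reflp ?reach" by (rule reflpI, rule reachable_refl)
  moreover have "transp ?reach" by (rule transpI, erule (1) reachable_trans)
  ultimately obtain D where CD: "?reach C D" and bottom: "\<forall>E. ?reach D E \<longrightarrow> ?reach E D"
    using finite_preorder_has_bottom by metis
  obtain n where en: "enabled N dm n D"
    using no_deadlock reachable_trans[OF C CD] unfolding deadlock_def by blast
  then have n: "n \<in> N" by (simp add: enabled_def)
  then obtain p where p: "p \<in> dm n" using dm_nonempty by blast
  have nDp: "n \<in> D p" using en p by (simp add: enabled_def)
  have D: "single_node_config D" using single CD .
  then obtain m where Dp: "D p = {m}" and "local_path N dm out delta ninit m"
    using p dm_subset_Proc[OF n] unfolding single_node_config_def by blast
  moreover have "m = n" using nDp Dp by simp
  ultimately have "p_path N dm out delta p n nfin" using paths n p by blast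
  then obtain E where "?reach D E" "E p = {nfin}"
    using p_path_followed[OF bottom en p] reachable_refl Dp \<open>m = n\<close> by blast
  then have "D p = {nfin}" using bottom nfin_persists by blast
  then have "n = nfin" using nDp by simp
  then show ?thesis using CD single_node_config_nfin_enabled[OF D] en by simp
qed

end

theorem lemma2p3:
  fixes Proc :: "'p set" and N :: "'n set" and R :: "'r set"
    and dm :: "'n \<Rightarrow> 'p set" and ninit nfin :: 'n
    and out :: "'n \<Rightarrow> 'r set" and delta :: "'n \<Rightarrow> 'r \<Rightarrow> 'p \<Rightarrow> 'n set"
  assumes "is_negotiation Proc N R dm ninit nfin out delta"
    and "deterministic Proc N dm out delta"
    and "\<forall>n\<in>N. local_path N dm out delta ninit n \<longrightarrow>
           (\<forall>p\<in>dm n. p_path N dm out delta p n nfin)"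
  shows "\<not> sound Proc N dm ninit nfin out delta \<longleftrightarrow>
    (\<exists>rs C. run N dm out delta (C_init Proc ninit) rs C \<and> deadlock N dm C)"
proof -
  interpret deterministic_negotiation Proc N R dm ninit nfin out delta
    using assms(1,2) by unfold_locales
  let ?reach = "reachable N dm out delta"
  have "(\<forall>C. ?reach (C_init Proc ninit) C \<longrightarrow> ?reach C (C_fin Proc nfin)) \<longleftrightarrow>
        (\<forall>C. ?reach (C_init Proc ninit) C \<longrightarrow> \<not> deadlock N dm C)"
  proof
    assume "\<forall>C. ?reach (C_init Proc ninit) C \<longrightarrow> ?reach C (C_fin Proc nfin)"
    then show "\<forall>C. ?reach (C_init Proc ninit) C \<longrightarrow> \<not> deadlock N dm C"
      using deadlock_reachable_eq C_fin_not_deadlock by metis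
  next
    assume "\<forall>C. ?reach (C_init Proc ninit) C \<longrightarrow> \<not> deadlock N dm C"
    then show "\<forall>C. ?reach (C_init Proc ninit) C \<longrightarrow> ?reach C (C_fin Proc nfin)"
      using C_fin_reachable_if_no_deadlock[OF assms(3)] by blast
  qed
  then show ?thesis unfolding sound_iff_C_fin_reachable reachable_def by blast
qed

end
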